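(* Let $n,r$ be integers with $n\ge r+2\ge 2$. There is a constant $C>0$ such that for all $v,w\in F_r=F(t_1,\dots,t_r)$ and all $i\in\{1,\dots,n-1\}$ such that either $v\in[F_r,F_r]$ or $i\in\{r+1,\dots,n-1\}$, we have $$\mathrm{Area}\Big(\big[w(X^{(i)}),v(\Delta)\big]\,\big[w(\Delta),v(\Delta)\big]^{-1}\Big)\le C\cdot\max\{|w|^2,|v|^2\}.$$
   Context: For $\alpha\in\{1,\dots,n\}$ let $F^{(\alpha)}$ be the free group on $a^{(\alpha)}_1,\dots,a^{(\alpha)}_r$, let $\psi\colon F^{(1)}\times\cdots\times F^{(n)}\to\mathbb Z^r$ send each $a^{(\alpha)}_j$ to $e_j$, and $K=\ker\psi$. For $\alpha\in\{1,\dots,n-1\}$, $j\in\{1,\dots,r\}$, $x^{(\alpha)}_j=a^{(\alpha)}_j(a^{(n)}_j)^{-1}$; $X^{(\alpha)}=(x^{(\alpha)}_1,\dots,x^{(\alpha)}_r)$; $X$ is the set of all $x^{(\alpha)}_j$ and $F(X)$ the abstract free group on it; $\Delta=(x^{(1)}_1,\dots,x^{(r)}_r)$. For $w\in F_r$ and a tuple $S=(s_1,\dots,s_r)$ in $F(X)$, $w(S)$ is the image of $w$ under $t_i\mapsto s_i$; $|w|$ is word length in $F_r$. $[g,h]=ghg^{-1}h^{-1}$. Let $\mathcal R=\mathcal R_1\cup\mathcal R_2$ with $\mathcal R_1=\{[x^{(\alpha)}_i,x^{(\beta)}_i]:\alpha\ne\beta\}$, $\mathcal R_2=\{[x^{(\alpha)}_i,x^{(\beta)}_j(x^{(\gamma)}_j)^{-1}]: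 i\neq j,\ \alpha,\beta,\gamma\in\{1,\dots,n-1\}\text{ pairwise distinct}\}$ (defining relators of $K$ on $X$). $\mathrm{Area}(u)$ for $u\in F(X)$ is the least number of conjugates of elements of $\mathcal R^{\pm1}$ whose product equals $u$ in $F(X)$. *)

theory Defs
  imports Main "HOL-Library.Extended_Real"
begin

text \<open>A letter is a generator together with a flag; (a, False) is a and (a, True) is a^-1.
  Elements of the free group on a set A are the freely reduced words with letters over A.\<close>

type_synonym 'a word = "('a \<times> bool) list"

definition inv_letter :: "'a \<times> bool \<Rightarrow> 'a \<times> bool" where
  "inv_letter l = (fst l, \<not> snd l)"

fun reduced :: "'a word \<Rightarrow> bool" where
  "reduced [] = True"
| "reduced [l] = True"
| "reduced (l # m # w) = (m \<noteq> inv_letter l \<and> reduced (m # w))"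

definition red_cons :: "'a \<times> bool \<Rightarrow> 'a word \<Rightarrow> 'a word" where
  "red_cons l w = (case w of [] \<Rightarrow> [l] | m # w' \<Rightarrow> (if m = inv_letter l then w' else l # w))"

definition reduce :: "'a word \<Rightarrow> 'a word" where
  "reduce w = foldr red_cons w []"

definition fg_mult :: "'a word \<Rightarrow> 'a word \<Rightarrow> 'a word" where
  "fg_mult u v = reduce (u @ v)"

definition fg_inv :: "'a word \<Rightarrow> 'a word" where
  "fg_inv w = rev (map inv_letter w)"

definition fg_comm :: "'a word \<Rightarrow> 'a word \<Rightarrow> 'a word" where
  "fg_comm g h = reduce (g @ h @ fg_inv g @ fg_inv h)"

definition letters :: "'a word \<Rightarrow> 'a set" where
  "letters w = fst ` set w"

definition in_free :: "'a set \<Rightarrow> 'a word \<Rightarrow> bool" where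
  "in_free A w \<longleftrightarrow> reduced w \<and> letters w \<subseteq> A"

text \<open>F_r = F(t_1,...,t_r): generators are the naturals 1..r. Word length |w| is the
  length of the reduced word.\<close>
definition Fr :: "nat \<Rightarrow> nat word set" where
  "Fr r = {w. in_free {1..r} w}"

text \<open>w(S): image of w under the homomorphism t_i \<mapsto> S i.\<close>
definition subst :: "(nat \<Rightarrow> 'b word) \<Rightarrow> nat word \<Rightarrow> 'b word" where
  "subst S w = reduce (concat (map (\<lambda>(i, b). if b then fg_inv (S i) else S i) w))"

inductive_set comm_subgroup :: "nat \<Rightarrow> nat word set" for r where
  one: "[] \<in> comm_subgroup r"
| comm: "g \<in> Fr r \<Longrightarrow> h \<in> Fr r \<Longrightarrow> fg_comm g h \<in> comm_subgroup r"
| mult: "a \<in> comm_subgroup r \<Longrightarrow> b \<in> comm_subgroup r \<Longrightarrow> fg_mult a b \<in> comm_subgroup r"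
| inv: "a \<in> comm_subgroup r \<Longrightarrow> fg_inv a \<in> comm_subgroup r"

text \<open>x^(alpha)_j is encoded as the generator (alpha, j), alpha \<in> {1..n-1}, j \<in> {1..r}.\<close>
definition Xgens :: "nat \<Rightarrow> nat \<Rightarrow> (nat \<times> nat) set" where
  "Xgens n r = {1..n-1} \<times> {1..r}"

definition xg :: "nat \<Rightarrow> nat \<Rightarrow> (nat \<times> nat) word" where
  "xg \<alpha> j = [((\<alpha>, j), False)]"

definition Xtuple :: "nat \<Rightarrow> nat \<Rightarrow> (nat \<times> nat) word" where
  "Xtuple \<alpha> j = xg \<alpha> j"

definition Delta :: "nat \<Rightarrow> (nat \<times> nat) word" where
  "Delta j = xg j j"

definition R1 :: "nat \<Rightarrow> nat \<Rightarrow> (nat \<times> nat) word set" where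
  "R1 n r = {fg_comm (xg \<alpha> i) (xg \<beta> i) | \<alpha> \<beta> i.
     \<alpha> \<in> {1..n-1} \<and> \<beta> \<in> {1..n-1} \<and> i \<in> {1..r} \<and> \<alpha> \<noteq> \<beta>}"

definition R2 :: "nat \<Rightarrow> nat \<Rightarrow> (nat \<times> nat) word set" where
  "R2 n r = {fg_comm (xg \<alpha> i) (fg_mult (xg \<beta> j) (fg_inv (xg \<gamma> j))) | \<alpha> \<beta> \<gamma> i j.
     \<alpha> \<in> {1..n-1} \<and> \<beta> \<in> {1..n-1} \<and> \<gamma> \<in> {1..n-1} \<and> i \<in> {1..r} \<and> j \<in> {1..r} \<and>
     i \<noteq> j \<and> \<alpha> \<noteq> \<beta> \<and> \<alpha> \<noteq> \<gamma> \<and> \<beta> \<noteq> \<gamma>}"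

definition Rel :: "nat \<Rightarrow> nat \<Rightarrow> (nat \<times> nat) word set" where
  "Rel n r = R1 n r \<union> R2 n r"

definition area_witness :: "nat \<Rightarrow> nat \<Rightarrow> (nat \<times> nat) word \<Rightarrow>
    ((nat \<times> nat) word \<times> (nat \<times> nat) word) list \<Rightarrow> bool" where
  "area_witness n r u cs \<longleftrightarrow>
     (\<forall>(g, \<rho>) \<in> set cs. in_free (Xgens n r) g \<and> (\<rho> \<in> Rel n r \<or> \<rho> \<in> fg_inv ` Rel n r)) \<and>
     reduce (concat (map (\<lambda>(g, \<rho>). g @ \<rho> @ fg_inv g) cs)) = reduce u"

definition Area :: "nat \<Rightarrow> nat \<Rightarrow> (nat \<times> nat) word \<Rightarrow> enat" where
  "Area n r u = (if \<exists>cs. area_witness n r u cs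
                 then enat (LEAST N. \<exists>cs. area_witness n r u cs \<and> length cs = N)
                 else \<infinity>)"

end

theory Submission
  imports Defs
begin

text \<open>Let delta be the identity on {1..r}, except that delta i = r + 1 when i <= r, and put
  D k = x^(delta k)_k, E j = x^(i)_j (D j)^-1, and E' j = E i for j = i, trivial otherwise.
  Then E j D j = x^(i)_j and E' j D j = x^(j)_j freely, and since i is never a value of delta,
  the relators R1 and R2 say precisely that each E j commutes with each D k. For such
  commuting families, w(E D) equals w(E) w(D) after |w|^2 swaps, and w(E) can then be pushed
  through w(D) v(D) w(D)^-1 to cancel against its inverse; so [w(E D), v(D)] and
  [w(D), v(D)] differ by 4|w|^2 + |w||v| relators, and likewise for E'. Moreover v(E' D)
  equals v(D) at cost |v|^2, because v(E') is the power of E' i by the exponent sum of t_i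
  in v, which vanishes when v is in [F_r, F_r] and when i > r. Chaining,
  [w(X^(i)), v(Delta)] = [w(E D), v(E' D)] ~ [w(D), v(D)] ~ [w(E' D), v(E' D)] = [w(Delta), v(Delta)]
  at quadratic cost.\<close>

section \<open>Free reduction\<close>

lemma inv_letter_inv_letter [simp]: "inv_letter (inv_letter l) = l"
  by (cases l) (simp add: inv_letter_def)

lemma fg_inv_fg_inv [simp]: "fg_inv (fg_inv w) = w"
  by (simp add: fg_inv_def rev_map comp_def)

lemma fg_inv_Nil [simp]: "fg_inv [] = []"
  by (simp add: fg_inv_def)

lemma fg_inv_Cons: "fg_inv (l # w) = fg_inv w @ [inv_letter l]"
  by (simp add: fg_inv_def)

lemma fg_inv_append [simp]: "fg_inv (a @ b) = fg_inv b @ fg_inv a"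
  by (simp add: fg_inv_def)

lemma length_fg_inv [simp]: "length (fg_inv w) = length w"
  by (simp add: fg_inv_def)

lemma letters_Nil [simp]: "letters [] = {}"
  by (simp add: letters_def)

lemma letters_Cons: "letters (l # w) = insert (fst l) (letters w)"
  by (simp add: letters_def)

lemma letters_append [simp]: "letters (a @ b) = letters a \<union> letters b"
  by (simp add: letters_def image_Un)

lemma letters_fg_inv [simp]: "letters (fg_inv w) = letters w"
  by (force simp: letters_def fg_inv_def inv_letter_def image_iff)

lemma fst_mem_letters: "l \<in> set w \<Longrightarrow> fst l \<in> letters w"
  by (simp add: letters_def)

lemma letters_red_cons: "letters (red_cons l w) \<subseteq> insert (fst l) (letters w)"
  by (cases w) (auto simp: red_cons_def letters_def)

lemma reduce_Nil [simp]: "reduce [] = []"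
  by (simp add: reduce_def)

lemma reduce_Cons: "reduce (l # w) = red_cons l (reduce w)"
  by (simp add: reduce_def)

lemma letters_reduce_subset: "letters (reduce w) \<subseteq> letters w"
  by (induction w) (use letters_red_cons in \<open>fastforce simp: reduce_Cons letters_Cons\<close>)+

lemma reduced_tl: "reduced (m # w) \<Longrightarrow> reduced w"
  by (cases w) auto

lemma reduced_red_cons: "reduced w \<Longrightarrow> reduced (red_cons l w)"
  by (cases w) (auto simp: red_cons_def dest: reduced_tl)

lemma reduced_foldr_red_cons: "reduced s \<Longrightarrow> reduced (foldr red_cons u s)"
  by (induction u) (auto intro: reduced_red_cons)

lemma reduced_reduce [simp]: "reduced (reduce w)"
  by (simp add: reduce_def reduced_foldr_red_cons)

lemma reduce_reduced: "reduced w \<Longrightarrow> reduce w = w"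
  by (induction w rule: reduced.induct) (simp_all add: reduce_Cons red_cons_def)

lemma reduce_reduce [simp]: "reduce (reduce w) = reduce w"
  by (simp add: reduce_reduced)

lemma red_cons_red_cons_inv: "reduced s \<Longrightarrow> red_cons l (red_cons (inv_letter l) s) = s"
  by (cases s rule: reduced.cases) (auto simp: red_cons_def)

lemma reduce_append: "reduce (a @ b) = foldr red_cons a (reduce b)"
  by (simp add: reduce_def)

lemma foldr_red_cons_red_cons:
  assumes "reduced s"
  shows "foldr red_cons (red_cons l t) s = red_cons l (foldr red_cons t s)"
proof (cases t)
  case (Cons m t')
  have "red_cons l (red_cons (inv_letter l) (foldr red_cons t' s)) = foldr red_cons t' s"
    using assms by (simp add: red_cons_red_cons_inv reduced_foldr_red_cons)
  with Cons show ?thesis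
    by (auto simp: red_cons_def)
qed (simp add: red_cons_def)

lemma foldr_red_cons_reduce: "reduced s \<Longrightarrow> foldr red_cons (reduce u) s = foldr red_cons u s"
  by (induction u) (simp_all add: reduce_Cons foldr_red_cons_red_cons)

lemma reduce_append_reduce_left [simp]: "reduce (reduce a @ b) = reduce (a @ b)"
  by (simp add: reduce_append foldr_red_cons_reduce)

lemma reduce_append_reduce_right [simp]: "reduce (a @ reduce b) = reduce (a @ b)"
  by (simp add: reduce_append)

lemma reduce_append_cong:
  "reduce a = reduce a' \<Longrightarrow> reduce b = reduce b' \<Longrightarrow> reduce (a @ b) = reduce (a' @ b')"
  by (metis reduce_append_reduce_left reduce_append_reduce_right)

lemma reduce_append_fg_inv [simp]: "reduce (u @ fg_inv u) = []"
proof (induction u rule: rev_induct)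
  case (snoc l u)
  have "reduce ([l] @ [inv_letter l] @ fg_inv u) = reduce (fg_inv u)"
    by (simp add: reduce_Cons red_cons_red_cons_inv)
  then have "reduce (u @ [l] @ [inv_letter l] @ fg_inv u) = reduce (u @ fg_inv u)"
    by (metis reduce_append_reduce_right)
  then show ?case
    using snoc by (simp add: fg_inv_def)
qed simp

lemma reduce_fg_inv_append [simp]: "reduce (fg_inv u @ u) = []"
  using reduce_append_fg_inv [of "fg_inv u"] by simp

lemma reduce_append_fg_inv_append [simp]: "reduce (u @ fg_inv u @ w) = reduce w"
  by (metis append_assoc append_Nil reduce_append_fg_inv reduce_append_reduce_left)

lemma reduce_fg_inv_append_append [simp]: "reduce (fg_inv u @ u @ w) = reduce w"
  using reduce_append_fg_inv_append [of "fg_inv u"] by simp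

lemma reduce_fg_inv_cong:
  assumes "reduce a = reduce a'"
  shows "reduce (fg_inv a) = reduce (fg_inv a')"
proof -
  have "reduce (fg_inv a) = reduce (fg_inv a @ reduce (a' @ fg_inv a'))"
    by simp
  also have "\<dots> = reduce (fg_inv a @ reduce a @ fg_inv a')"
    by (metis append_assoc assms reduce_append_reduce_left reduce_append_reduce_right)
  also have "\<dots> = reduce (fg_inv a')"
    by (metis append_assoc append_Nil reduce_append_reduce_left reduce_append_reduce_right
        reduce_fg_inv_append)
  finally show ?thesis .
qed

lemma reduce_fg_inv_reduce [simp]: "reduce (fg_inv (reduce a)) = reduce (fg_inv a)"
  by (rule reduce_fg_inv_cong) simp

lemma reduce_append_fg_inv_reduce [simp]: "reduce (a @ fg_inv (reduce b)) = reduce (a @ fg_inv b)"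
  by (metis reduce_append_reduce_right reduce_fg_inv_reduce)

lemma foldr_red_cons_fg_inv_cancel:
  "reduced s \<Longrightarrow> foldr red_cons x (foldr red_cons (fg_inv x) s) = s"
  "reduced s \<Longrightarrow> foldr red_cons (fg_inv x) (foldr red_cons x s) = s"
  using reduce_append_fg_inv [of x] reduce_fg_inv_append [of x]
  by (metis append_assoc reduce_append reduce_append_reduce_left reduce_reduced self_append_conv2)+

lemma foldr_red_cons_foldr_red_cons:
  "reduced t \<Longrightarrow> reduced s \<Longrightarrow>
   foldr red_cons (foldr red_cons u t) s = foldr red_cons u (foldr red_cons t s)"
  using foldr_red_cons_reduce [of s "u @ t"] by (simp add: reduce_append reduce_reduced)

lemma foldr_red_cons_fg_inv_foldr_red_cons:
  "reduced t \<Longrightarrow> reduced s \<Longrightarrow>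
   foldr red_cons (fg_inv (foldr red_cons u t)) s = foldr red_cons (fg_inv t) (foldr red_cons (fg_inv u) s)"
proof -
  assume "reduced t" "reduced s"
  then have "foldr red_cons (fg_inv (foldr red_cons u t)) s
      = foldr red_cons (reduce (fg_inv (reduce (u @ t)))) s"
    by (simp add: reduce_append reduce_reduced foldr_red_cons_reduce)
  also have "\<dots> = foldr red_cons (fg_inv t @ fg_inv u) s"
    using \<open>reduced s\<close> by (simp add: foldr_red_cons_reduce)
  finally show ?thesis
    by simp
qed

text \<open>Rewriting with these rules and append_assoc turns the reduction of a product
  a1 @ ... @ ak into the nested action of a1, ..., ak on the empty word, in which
  adjacent factors x and fg_inv x cancel at any depth.\<close>

lemmas reduce_normalize = reduce_def foldr_append foldr_red_cons_fg_inv_cancel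
  foldr_red_cons_foldr_red_cons foldr_red_cons_fg_inv_foldr_red_cons reduced_foldr_red_cons
  reduced.simps(1) fg_inv_append fg_inv_fg_inv fg_inv_Nil foldr_Nil id_apply append_Nil append_Nil2

section \<open>Area in a group presentation\<close>

definition conj_product :: "('a word \<times> 'a word) list \<Rightarrow> 'a word" where
  "conj_product cs = concat (map (\<lambda>(g, \<rho>). g @ \<rho> @ fg_inv g) cs)"

definition comm_word :: "'a word \<Rightarrow> 'a word \<Rightarrow> 'a word" where
  "comm_word a b = a @ b @ fg_inv a @ fg_inv b"

lemma fg_comm_eq_reduce_comm_word: "fg_comm a b = reduce (comm_word a b)"
  by (simp add: fg_comm_def comm_word_def)

lemma reduce_comm_word_cong:
  "reduce a = reduce a' \<Longrightarrow> reduce b = reduce b' \<Longrightarrow> reduce (comm_word a b) = reduce (comm_word a' b')"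
  unfolding comm_word_def by (intro reduce_append_cong reduce_fg_inv_cong)

lemma conj_product_append [simp]: "conj_product (cs @ ds) = conj_product cs @ conj_product ds"
  by (simp add: conj_product_def)

lemma reduce_conj_product_conj:
  "reduce (conj_product (map (\<lambda>(g, \<rho>). (reduce (h @ g), \<rho>)) cs)) = reduce (h @ conj_product cs @ fg_inv h)"
proof (induction cs)
  case (Cons c cs)
  obtain g \<rho> where c: "c = (g, \<rho>)"
    by (cases c)
  let ?cs' = "map (\<lambda>(g, \<rho>). (reduce (h @ g), \<rho>)) cs"
  have "reduce (conj_product (map (\<lambda>(g, \<rho>). (reduce (h @ g), \<rho>)) (c # cs)))
      = reduce (reduce (h @ g) @ \<rho> @ fg_inv (reduce (h @ g)) @ conj_product ?cs')"
    by (simp add: conj_product_def c)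
  also have "\<dots> = reduce (h @ g @ \<rho> @ fg_inv g @ fg_inv h @ reduce (conj_product ?cs'))"
    by (simp only: reduce_normalize append_assoc)
  also have "\<dots> = reduce (h @ g @ \<rho> @ fg_inv g @ fg_inv h @ reduce (h @ conj_product cs @ fg_inv h))"
    by (simp only: Cons.IH)
  also have "\<dots> = reduce (h @ (g @ \<rho> @ fg_inv g @ conj_product cs) @ fg_inv h)"
    by (simp only: reduce_normalize append_assoc)
  finally show ?case
    by (simp add: conj_product_def c)
qed (simp add: conj_product_def)

lemma fg_inv_conj_product:
  "fg_inv (conj_product cs) = conj_product (map (\<lambda>(g, \<rho>). (g, fg_inv \<rho>)) (rev cs))"
  by (induction cs) (auto simp: conj_product_def)

locale presentation =
  fixes gens :: "'a set" and rels :: "'a word set"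
begin

definition relator_conjugates :: "('a word \<times> 'a word) list \<Rightarrow> bool" where
  "relator_conjugates cs \<longleftrightarrow> (\<forall>(g, \<rho>) \<in> set cs. in_free gens g \<and> (\<rho> \<in> rels \<or> \<rho> \<in> fg_inv ` rels))"

definition area_le :: "nat \<Rightarrow> 'a word \<Rightarrow> bool" where
  "area_le k u \<longleftrightarrow> (\<exists>cs. length cs \<le> k \<and> relator_conjugates cs \<and> reduce (conj_product cs) = reduce u)"

lemma area_le_reduce_cong: "area_le k u \<Longrightarrow> reduce u = reduce u' \<Longrightarrow> area_le k u'"
  by (auto simp: area_le_def)

lemma area_le_mono: "area_le k u \<Longrightarrow> k \<le> k' \<Longrightarrow> area_le k' u"
  by (force simp: area_le_def)

lemma area_le_trivial: "reduce u = [] \<Longrightarrow> area_le k u"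
  unfolding area_le_def
  by (rule exI [of _ "[]"]) (simp add: conj_product_def relator_conjugates_def)

lemma area_le_relator: "\<rho> \<in> rels \<Longrightarrow> area_le 1 \<rho>"
  unfolding area_le_def
  by (rule exI [of _ "[([], \<rho>)]"]) (simp add: conj_product_def relator_conjugates_def in_free_def)

lemma area_le_append:
  assumes "area_le a u" "area_le b v"
  shows "area_le (a + b) (u @ v)"
proof -
  obtain cs ds where cs: "length cs \<le> a" "relator_conjugates cs" "reduce (conj_product cs) = reduce u"
    and ds: "length ds \<le> b" "relator_conjugates ds" "reduce (conj_product ds) = reduce v"
    using assms unfolding area_le_def by blast
  have "reduce (conj_product (cs @ ds)) = reduce (u @ v)"
    using reduce_append_cong [OF cs(3) ds(3)] by simp
  with cs ds show ?thesis
    unfolding area_le_def relator_conjugates_def by (intro exI [of _ "cs @ ds"]) auto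
qed

lemma area_le_fg_inv:
  assumes "area_le k u"
  shows "area_le k (fg_inv u)"
proof -
  obtain cs where cs: "length cs \<le> k" "relator_conjugates cs" "reduce (conj_product cs) = reduce u"
    using assms unfolding area_le_def by blast
  let ?cs = "map (\<lambda>(g, \<rho>). (g, fg_inv \<rho>)) (rev cs)"
  have "reduce (conj_product ?cs) = reduce (fg_inv u)"
    using reduce_fg_inv_cong [OF cs(3)] by (simp add: fg_inv_conj_product)
  moreover have "relator_conjugates ?cs"
    using cs(2) by (auto simp: relator_conjugates_def)
  ultimately show ?thesis
    unfolding area_le_def using cs(1) by (intro exI [of _ ?cs]) auto
qed

lemma area_le_conj:
  assumes "area_le k u" and h: "letters h \<subseteq> gens"
  shows "area_le k (h @ u @ fg_inv h)"
proof -
  obtain cs where cs: "length cs \<le> k" "relator_conjugates cs" "reduce (conj_product cs) = reduce u"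
    using assms(1) unfolding area_le_def by blast
  let ?cs = "map (\<lambda>(g, \<rho>). (reduce (h @ g), \<rho>)) cs"
  have "in_free gens (reduce (h @ g))" if "(g, \<rho>) \<in> set cs" for g \<rho>
    using cs(2) that h letters_reduce_subset [of "h @ g"]
    unfolding in_free_def relator_conjugates_def by fastforce
  then have "relator_conjugates ?cs"
    using cs(2) by (auto simp: relator_conjugates_def)
  moreover have "reduce (conj_product ?cs) = reduce (h @ u @ fg_inv h)"
    using reduce_append_cong [OF refl reduce_append_cong [OF cs(3) refl], of h "fg_inv h"]
    by (simp add: reduce_conj_product_conj)
  ultimately show ?thesis
    unfolding area_le_def using cs(1) by (intro exI [of _ ?cs]) auto
qed

definition area_equiv :: "nat \<Rightarrow> 'a word \<Rightarrow> 'a word \<Rightarrow> bool" where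
  "area_equiv k u u' \<longleftrightarrow> area_le k (u @ fg_inv u')"

definition commutes :: "'a word \<Rightarrow> 'a word \<Rightarrow> bool" where
  "commutes x y \<longleftrightarrow> area_le 1 (comm_word x y)"

lemma area_equiv_reduce: "reduce u = reduce u' \<Longrightarrow> area_equiv k u u'"
  unfolding area_equiv_def
  by (rule area_le_trivial) (metis reduce_append_cong reduce_append_fg_inv)

lemma area_equiv_refl: "area_equiv k u u"
  by (rule area_equiv_reduce) simp

lemma area_equiv_reduce_cong:
  "area_equiv k u v \<Longrightarrow> reduce u = reduce u' \<Longrightarrow> reduce v = reduce v' \<Longrightarrow> area_equiv k u' v'"
  unfolding area_equiv_def
  by (erule area_le_reduce_cong) (intro reduce_append_cong reduce_fg_inv_cong)

lemma area_equiv_mono: "area_equiv k u u' \<Longrightarrow> k \<le> k' \<Longrightarrow> area_equiv k' u u'"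
  unfolding area_equiv_def by (rule area_le_mono)

lemma area_equiv_sym: "area_equiv k u u' \<Longrightarrow> area_equiv k u' u"
  unfolding area_equiv_def by (drule area_le_fg_inv) simp

lemma area_equiv_trans [trans]:
  "area_equiv a u u' \<Longrightarrow> area_equiv b u' u'' \<Longrightarrow> area_equiv (a + b) u u''"
  unfolding area_equiv_def
  by (drule (1) area_le_append, erule area_le_reduce_cong) (simp only: reduce_normalize append_assoc)

lemma area_equiv_cong:
  "area_equiv k u u' \<Longrightarrow> letters p \<subseteq> gens \<Longrightarrow> area_equiv k (p @ u @ q) (p @ u' @ q)"
  unfolding area_equiv_def
  by (drule (1) area_le_conj, erule area_le_reduce_cong) (simp only: reduce_normalize append_assoc)

lemma area_equiv_append_right: "area_equiv k u u' \<Longrightarrow> area_equiv k (u @ q) (u' @ q)"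
  using area_equiv_cong [of k u u' "[]" q] by simp

lemma area_equiv_append_left:
  "area_equiv k u u' \<Longrightarrow> letters p \<subseteq> gens \<Longrightarrow> area_equiv k (p @ u) (p @ u')"
  using area_equiv_cong [of k u u' p "[]"] by simp

lemma area_equiv_fg_inv:
  "area_equiv k u u' \<Longrightarrow> letters u \<subseteq> gens \<Longrightarrow> area_equiv k (fg_inv u) (fg_inv u')"
  unfolding area_equiv_def
  by (drule area_le_fg_inv, drule area_le_conj [of _ _ "fg_inv u"], simp,
      erule area_le_reduce_cong) (simp only: reduce_normalize append_assoc)

lemma area_equiv_comm_word_right:
  assumes "area_equiv k v v'" "letters w \<subseteq> gens" "letters v \<subseteq> gens" "letters v' \<subseteq> gens"
  shows "area_equiv (k + k) (comm_word w v) (comm_word w v')"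
proof -
  have "area_equiv k (w @ v @ fg_inv w @ fg_inv v) (w @ v' @ fg_inv w @ fg_inv v)"
    using area_equiv_cong [OF assms(1,2)] by simp
  also have "area_equiv k \<dots> (w @ v' @ fg_inv w @ fg_inv v')"
    using area_equiv_append_left [OF area_equiv_fg_inv [OF assms(1,3)], of "w @ v' @ fg_inv w"]
      assms by simp
  finally show ?thesis
    by (simp add: comm_word_def)
qed

lemma commutes_swap: "commutes x y \<Longrightarrow> area_equiv 1 (x @ y) (y @ x)"
  by (simp add: commutes_def area_equiv_def comm_word_def)

lemma commutes_sym: "commutes x y \<Longrightarrow> commutes y x"
  unfolding commutes_def comm_word_def by (drule area_le_fg_inv) simp

lemma commutes_Nil: "commutes [] y"
  unfolding commutes_def comm_word_def by (rule area_le_trivial) simp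

lemma commutes_fg_inv_left: "commutes x y \<Longrightarrow> letters x \<subseteq> gens \<Longrightarrow> commutes (fg_inv x) y"
  unfolding commutes_def comm_word_def
  by (drule area_le_conj [of _ _ "fg_inv x"], simp, drule area_le_fg_inv,
      erule area_le_reduce_cong) (simp only: reduce_normalize append_assoc)

lemma commutes_fg_inv_right: "commutes x y \<Longrightarrow> letters y \<subseteq> gens \<Longrightarrow> commutes x (fg_inv y)"
  by (rule commutes_sym, rule commutes_fg_inv_left, erule commutes_sym)

lemma commutes_append_fg_inv: "commutes a b \<Longrightarrow> commutes (a @ fg_inv b) b"
  unfolding commutes_def comm_word_def by (erule area_le_reduce_cong) (simp only: reduce_normalize append_assoc)

lemma area_equiv_swap_concat:
  assumes "\<And>y. y \<in> set ys \<Longrightarrow> commutes x y \<and> letters y \<subseteq> gens" and "letters x \<subseteq> gens"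
  shows "area_equiv (length ys) (x @ concat ys) (concat ys @ x)"
  using assms(1)
proof (induction ys)
  case (Cons y ys)
  have "area_equiv 1 (x @ y @ concat ys) (y @ x @ concat ys)"
    using area_equiv_append_right [OF commutes_swap, of x y "concat ys"] Cons.prems by simp
  also have "area_equiv (length ys) \<dots> (y @ concat ys @ x)"
    using area_equiv_append_left [OF Cons.IH] Cons.prems by simp
  finally show ?case
    by simp
qed (simp add: area_equiv_refl)

lemma area_equiv_swap_concat_concat:
  assumes "\<And>x y. x \<in> set xs \<Longrightarrow> y \<in> set ys \<Longrightarrow> commutes x y"
    and "\<And>x. x \<in> set xs \<Longrightarrow> letters x \<subseteq> gens" and "\<And>y. y \<in> set ys \<Longrightarrow> letters y \<subseteq> gens"
  shows "area_equiv (length xs * length ys) (concat xs @ concat ys) (concat ys @ concat xs)"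
  using assms(1,2)
proof (induction xs)
  case (Cons x xs)
  have "area_equiv (length xs * length ys) (x @ concat xs @ concat ys) (x @ concat ys @ concat xs)"
    using area_equiv_append_left [OF Cons.IH] Cons.prems by simp
  also have "area_equiv (length ys) \<dots> (concat ys @ x @ concat xs)"
    using area_equiv_append_right [OF area_equiv_swap_concat, of ys x "concat xs"] Cons.prems assms(3)
    by simp
  finally show ?case
    by (simp add: add.commute)
qed (simp add: area_equiv_refl)

end

section \<open>Substitution without reduction\<close>

definition subst_letter :: "(nat \<Rightarrow> 'b word) \<Rightarrow> nat \<times> bool \<Rightarrow> 'b word" where
  "subst_letter S l = (if snd l then fg_inv (S (fst l)) else S (fst l))"

definition subst_word :: "(nat \<Rightarrow> 'b word) \<Rightarrow> nat word \<Rightarrow> 'b word" where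
  "subst_word S w = concat (map (subst_letter S) w)"

lemma subst_eq_reduce_subst_word: "subst S w = reduce (subst_word S w)"
proof -
  have "subst_letter S = (\<lambda>(i, b). if b then fg_inv (S i) else S i)"
    by (auto simp: subst_letter_def)
  then show ?thesis
    by (simp add: subst_def subst_word_def)
qed

lemma subst_word_Nil [simp]: "subst_word S [] = []"
  by (simp add: subst_word_def)

lemma subst_word_Cons [simp]: "subst_word S (l # w) = subst_letter S l @ subst_word S w"
  by (simp add: subst_word_def)

lemma subst_word_append [simp]: "subst_word S (a @ b) = subst_word S a @ subst_word S b"
  by (simp add: subst_word_def)

lemma letters_subst_letter [simp]: "letters (subst_letter S l) = letters (S (fst l))"
  by (simp add: subst_letter_def)

lemma fg_inv_subst_word: "fg_inv (subst_word S w) = subst_word S (fg_inv w)"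
proof (induction w)
  case (Cons l w)
  have "subst_letter S (inv_letter l) = fg_inv (subst_letter S l)"
    by (simp add: subst_letter_def inv_letter_def)
  with Cons show ?case
    by (simp add: fg_inv_Cons)
qed simp

lemma letters_subst_word_subset:
  "(\<And>j. j \<in> letters w \<Longrightarrow> letters (S j) \<subseteq> A) \<Longrightarrow> letters (subst_word S w) \<subseteq> A"
  by (induction w) (auto simp: letters_Cons)

lemma reduce_subst_word_cong:
  "(\<And>j. j \<in> letters w \<Longrightarrow> reduce (S j) = reduce (S' j)) \<Longrightarrow>
   reduce (subst_word S w) = reduce (subst_word S' w)"
proof (induction w)
  case (Cons l w)
  have S: "reduce (S (fst l)) = reduce (S' (fst l))"
    using Cons.prems by (simp add: letters_Cons)
  then have "reduce (subst_letter S l) = reduce (subst_letter S' l)"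
    using reduce_fg_inv_cong [OF S] by (simp add: subst_letter_def)
  moreover have "reduce (subst_word S w) = reduce (subst_word S' w)"
    using Cons by (simp add: letters_Cons)
  ultimately show ?case
    using reduce_append_cong by simp
qed simp

context presentation
begin

definition commuting_on :: "nat set \<Rightarrow> (nat \<Rightarrow> 'a word) \<Rightarrow> (nat \<Rightarrow> 'a word) \<Rightarrow> bool" where
  "commuting_on I E D \<longleftrightarrow>
     (\<forall>j \<in> I. \<forall>k \<in> I. commutes (E j) (D k)) \<and> (\<forall>j \<in> I. letters (E j) \<subseteq> gens \<and> letters (D j) \<subseteq> gens)"

lemma commutes_subst_letter:
  assumes "commuting_on I E D" "fst l \<in> I" "fst l' \<in> I"
  shows "commutes (subst_letter E l) (subst_letter D l')"
proof -
  have "commutes (E (fst l)) (D (fst l'))" "letters (E (fst l)) \<subseteq> gens" "letters (D (fst l')) \<subseteq> gens"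
    using assms by (auto simp: commuting_on_def)
  then show ?thesis
    unfolding subst_letter_def
    by (cases "snd l"; cases "snd l'") (simp_all add: commutes_fg_inv_left commutes_fg_inv_right)
qed

lemma letters_subst_word_commuting_on:
  assumes "commuting_on I E D" "letters u \<subseteq> I"
  shows "letters (subst_word E u) \<subseteq> gens" "letters (subst_word D u) \<subseteq> gens"
    "letters (subst_word (\<lambda>j. E j @ D j) u) \<subseteq> gens"
proof -
  have "letters (E j) \<subseteq> gens \<and> letters (D j) \<subseteq> gens" if "j \<in> letters u" for j
    using assms that by (auto simp: commuting_on_def)
  then show "letters (subst_word E u) \<subseteq> gens" "letters (subst_word D u) \<subseteq> gens"
    "letters (subst_word (\<lambda>j. E j @ D j) u) \<subseteq> gens"
    by (intro letters_subst_word_subset; fastforce)+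
qed

lemma area_equiv_swap_subst_word:
  assumes ED: "commuting_on I E D" and u: "letters u \<subseteq> I" and u': "letters u' \<subseteq> I"
  shows "area_equiv (length u * length u') (subst_word E u @ subst_word D u') (subst_word D u' @ subst_word E u)"
proof -
  have "area_equiv (length (map (subst_letter E) u) * length (map (subst_letter D) u'))
      (concat (map (subst_letter E) u) @ concat (map (subst_letter D) u'))
      (concat (map (subst_letter D) u') @ concat (map (subst_letter E) u))"
  proof (rule area_equiv_swap_concat_concat)
    fix x y assume "x \<in> set (map (subst_letter E) u)" "y \<in> set (map (subst_letter D) u')"
    then show "commutes x y"
      using commutes_subst_letter [OF ED] u u' fst_mem_letters by fastforce
  next
    fix x assume "x \<in> set (map (subst_letter E) u)"
    then show "letters x \<subseteq> gens"
      using ED u fst_mem_letters by (fastforce simp: commuting_on_def)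
  next
    fix y assume "y \<in> set (map (subst_letter D) u')"
    then show "letters y \<subseteq> gens"
      using ED u' fst_mem_letters by (fastforce simp: commuting_on_def)
  qed
  then show ?thesis
    by (simp add: subst_word_def)
qed

lemma area_equiv_subst_word_product:
  assumes ED: "commuting_on I E D"
  shows "letters w \<subseteq> I \<Longrightarrow>
    area_equiv (length w * length w) (subst_word (\<lambda>j. E j @ D j) w) (subst_word E w @ subst_word D w)"
proof (induction w)
  case (Cons l w)
  have l: "fst l \<in> I" and w: "letters w \<subseteq> I"
    using Cons.prems by (auto simp: letters_Cons)
  have gens_l: "letters (subst_letter E l) \<subseteq> gens" "letters (subst_letter D l) \<subseteq> gens"
    using ED l by (auto simp: commuting_on_def)
  have letter: "area_equiv 1 (subst_letter (\<lambda>j. E j @ D j) l) (subst_letter E l @ subst_letter D l)"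
  proof (cases "snd l")
    case True
    have "commutes (subst_letter D l) (subst_letter E l)"
      using commutes_subst_letter [OF ED l l] by (rule commutes_sym)
    with True show ?thesis
      using commutes_swap by (simp add: subst_letter_def)
  qed (simp add: subst_letter_def area_equiv_refl)
  have "area_equiv 1 (subst_word (\<lambda>j. E j @ D j) (l # w))
      (subst_letter E l @ subst_letter D l @ subst_word (\<lambda>j. E j @ D j) w)"
    using area_equiv_append_right [OF letter, of "subst_word (\<lambda>j. E j @ D j) w"] by simp
  also have "area_equiv (length w * length w) \<dots>
      (subst_letter E l @ subst_letter D l @ subst_word E w @ subst_word D w)"
    using area_equiv_append_left [OF Cons.IH [OF w], of "subst_letter E l @ subst_letter D l"]
      gens_l by simp
  also have "area_equiv (length w * 1) \<dots> (subst_word E (l # w) @ subst_word D (l # w))"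
    using area_equiv_cong [OF area_equiv_sym [OF area_equiv_swap_subst_word [OF ED w, of "[l]"]],
        of "subst_letter E l" "subst_word D w"] l gens_l by (simp add: letters_Cons)
  finally show ?case
    by (rule area_equiv_mono) simp
qed (simp add: area_equiv_refl)

lemma area_equiv_comm_word_subst_word_product:
  assumes ED: "commuting_on I E D" and w: "letters w \<subseteq> I" and v: "letters v \<subseteq> I"
  shows "area_equiv (4 * length w * length w + length w * length v)
     (comm_word (subst_word (\<lambda>j. E j @ D j) w) (subst_word D v)) (comm_word (subst_word D w) (subst_word D v))"
proof -
  let ?A = "subst_word (\<lambda>j. E j @ D j) w" and ?E = "subst_word E w" and ?D = "subst_word D w"
    and ?V = "subst_word D v"
  have gens: "letters ?A \<subseteq> gens" "letters ?E \<subseteq> gens" "letters ?D \<subseteq> gens" "letters ?V \<subseteq> gens"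
    using letters_subst_word_commuting_on [OF ED w] letters_subst_word_commuting_on [OF ED v]
    by simp_all
  have A: "area_equiv (length w * length w) ?A (?E @ ?D)"
    by (rule area_equiv_subst_word_product [OF ED w])
  have "area_equiv (length w * length w) (comm_word ?A ?V) (?E @ ?D @ ?V @ fg_inv ?A @ fg_inv ?V)"
    using area_equiv_append_right [OF A, of "?V @ fg_inv ?A @ fg_inv ?V"] by (simp add: comm_word_def)
  also have "area_equiv (length w * length w) \<dots> (?E @ ?D @ ?V @ fg_inv ?D @ fg_inv ?E @ fg_inv ?V)"
    using area_equiv_cong [OF area_equiv_fg_inv [OF A gens(1)], of "?E @ ?D @ ?V" "fg_inv ?V"] gens
    by simp
  also have "area_equiv (length w * (length w + length v + length w)) \<dots>
      ((?D @ ?V @ fg_inv ?D) @ ?E @ fg_inv ?E @ fg_inv ?V)"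
    using area_equiv_append_right [OF area_equiv_swap_subst_word [OF ED w, of "w @ v @ fg_inv w"],
        of "fg_inv ?E @ fg_inv ?V"] w v by (simp add: fg_inv_subst_word add.commute)
  also have "area_equiv 0 \<dots> (comm_word ?D ?V)"
    by (rule area_equiv_reduce) (simp only: comm_word_def reduce_normalize append_assoc)
  finally show ?thesis
    by (rule area_equiv_mono) (simp add: algebra_simps)
qed

end

section \<open>Exponent sums and powers\<close>

definition letter_exp :: "nat \<Rightarrow> nat \<times> bool \<Rightarrow> int" where
  "letter_exp i l = (if fst l = i then (if snd l then -1 else 1) else 0)"

definition exp_sum :: "nat \<Rightarrow> nat word \<Rightarrow> int" where
  "exp_sum i w = sum_list (map (letter_exp i) w)"

lemma exp_sum_Nil [simp]: "exp_sum i [] = 0"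
  by (simp add: exp_sum_def)

lemma exp_sum_Cons [simp]: "exp_sum i (l # w) = letter_exp i l + exp_sum i w"
  by (simp add: exp_sum_def)

lemma exp_sum_append [simp]: "exp_sum i (a @ b) = exp_sum i a + exp_sum i b"
  by (simp add: exp_sum_def)

lemma letter_exp_inv_letter [simp]: "letter_exp i (inv_letter l) = - letter_exp i l"
  by (simp add: letter_exp_def inv_letter_def)

lemma exp_sum_fg_inv [simp]: "exp_sum i (fg_inv w) = - exp_sum i w"
  by (induction w) (simp_all add: fg_inv_Cons)

lemma exp_sum_reduce [simp]: "exp_sum i (reduce w) = exp_sum i w"
proof (induction w)
  case (Cons l w)
  have "exp_sum i (red_cons l u) = letter_exp i l + exp_sum i u" for u
    by (cases u) (auto simp: red_cons_def)
  with Cons show ?case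
    by (simp add: reduce_Cons)
qed simp

lemma exp_sum_not_in_letters: "i \<notin> letters w \<Longrightarrow> exp_sum i w = 0"
  by (induction w) (auto simp: letters_Cons letter_exp_def)

lemma exp_sum_comm_subgroup: "v \<in> comm_subgroup r \<Longrightarrow> exp_sum i v = 0"
  by (induction rule: comm_subgroup.induct) (simp_all add: fg_comm_def fg_mult_def)

definition fg_pow :: "'a word \<Rightarrow> int \<Rightarrow> 'a word" where
  "fg_pow f z = (if 0 \<le> z then concat (replicate (nat z) f) else concat (replicate (nat (- z)) (fg_inv f)))"

lemma fg_pow_0 [simp]: "fg_pow f 0 = []"
  by (simp add: fg_pow_def)

lemma reduce_fg_pow_plus_1: "reduce (f @ fg_pow f z) = reduce (fg_pow f (z + 1))"
proof (cases "0 \<le> z")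
  case True
  then have "nat (z + 1) = Suc (nat z)"
    by simp
  with True show ?thesis
    by (simp add: fg_pow_def)
next
  case False
  define k where "k = nat (- z) - 1"
  have "nat (- z) = Suc k" "nat (- (z + 1)) = k"
    using False by (auto simp: k_def)
  then have "fg_pow f z = fg_inv f @ fg_pow f (z + 1)"
    using False by (cases "z = -1") (simp_all add: fg_pow_def)
  then show ?thesis
    by simp
qed

lemma reduce_fg_pow_minus_1: "reduce (fg_inv f @ fg_pow f z) = reduce (fg_pow f (z - 1))"
  using reduce_fg_pow_plus_1 [of f "z - 1"]
  by (metis reduce_append_reduce_right reduce_fg_inv_append_append diff_add_cancel)

lemma reduce_subst_word_single:
  "reduce (subst_word (\<lambda>j. if j = i then f else []) v) = reduce (fg_pow f (exp_sum i v))"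
proof (induction v)
  case (Cons l v)
  let ?S = "\<lambda>j. if j = i then f else []"
  have "reduce (subst_word ?S (l # v)) = reduce (subst_letter ?S l @ fg_pow f (exp_sum i v))"
    by (metis Cons.IH reduce_append_reduce_right subst_word_Cons)
  also have "\<dots> = reduce (fg_pow f (exp_sum i (l # v)))"
    by (auto simp: subst_letter_def letter_exp_def reduce_fg_pow_plus_1 reduce_fg_pow_minus_1
        add.commute)
  finally show ?case .
qed simp

context presentation
begin

lemma area_equiv_subst_word_trivial_factor:
  assumes ED: "commuting_on I E D" and v: "letters v \<subseteq> I" and E: "reduce (subst_word E v) = []"
  shows "area_equiv (length v * length v) (subst_word (\<lambda>j. E j @ D j) v) (subst_word D v)"
proof (rule area_equiv_reduce_cong [OF area_equiv_subst_word_product [OF ED v] refl])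
  show "reduce (subst_word E v @ subst_word D v) = reduce (subst_word D v)"
    by (metis E append_Nil reduce_append_reduce_left)
qed

lemma area_equiv_comm_word_two_families:
  assumes E: "commuting_on I E D" and E': "commuting_on I E' D"
    and w: "letters w \<subseteq> I" and v: "letters v \<subseteq> I" and E'v: "reduce (subst_word E' v) = []"
  shows "area_equiv (4 * length v * length v + 2 * (4 * length w * length w + length w * length v))
    (comm_word (subst_word (\<lambda>j. E j @ D j) w) (subst_word (\<lambda>j. E' j @ D j) v))
    (comm_word (subst_word (\<lambda>j. E' j @ D j) w) (subst_word (\<lambda>j. E' j @ D j) v))"
proof -
  let ?W = "subst_word (\<lambda>j. E j @ D j) w" and ?W' = "subst_word (\<lambda>j. E' j @ D j) w"
    and ?V' = "subst_word (\<lambda>j. E' j @ D j) v" and ?V = "subst_word D v"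
  have V: "area_equiv (length v * length v) ?V' ?V"
    by (rule area_equiv_subst_word_trivial_factor [OF E' v E'v])
  note gens = letters_subst_word_commuting_on [OF E w] letters_subst_word_commuting_on [OF E' w]
    letters_subst_word_commuting_on [OF E' v]
  have "area_equiv (length v * length v + length v * length v) (comm_word ?W ?V') (comm_word ?W ?V)"
    using area_equiv_comm_word_right [OF V] gens by simp
  also have "area_equiv (4 * length w * length w + length w * length v) \<dots>
      (comm_word (subst_word D w) ?V)"
    by (rule area_equiv_comm_word_subst_word_product [OF E w v])
  also have "area_equiv (4 * length w * length w + length w * length v) \<dots> (comm_word ?W' ?V)"
    by (rule area_equiv_sym, rule area_equiv_comm_word_subst_word_product [OF E' w v])
  also have "area_equiv (length v * length v + length v * length v) \<dots> (comm_word ?W' ?V')"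
    using area_equiv_sym [OF area_equiv_comm_word_right [OF V]] gens by simp
  finally show ?thesis
    by (rule area_equiv_mono) simp
qed

lemma commutes_if_relator: "fg_comm x y \<in> rels \<Longrightarrow> commutes x y"
  unfolding commutes_def by (erule area_le_relator [THEN area_le_reduce_cong]) (simp add: fg_comm_def comm_word_def)

lemma commutes_reduce_cong: "commutes x y \<Longrightarrow> reduce x = reduce x' \<Longrightarrow> reduce y = reduce y' \<Longrightarrow> commutes x' y'"
  unfolding commutes_def by (erule area_le_reduce_cong) (rule reduce_comm_word_cong)

end

section \<open>The relators of K\<close>

lemma letters_xg [simp]: "letters (xg \<alpha> j) = {(\<alpha>, j)}"
  by (simp add: xg_def letters_def)

context
  fixes n r :: nat
begin

interpretation K: presentation "Xgens n r" "Rel n r" .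

lemma commutes_xg_fg_inv_xg:
  assumes "\<alpha> \<in> {1..n-1}" "\<beta> \<in> {1..n-1}" "\<gamma> \<in> {1..n-1}" "j \<in> {1..r}" "k \<in> {1..r}" "\<alpha> \<noteq> \<beta>"
    and "k = j \<Longrightarrow> \<gamma> = \<beta>" and "k \<noteq> j \<Longrightarrow> \<gamma> \<noteq> \<alpha> \<and> \<gamma> \<noteq> \<beta>"
  shows "K.commutes (xg \<alpha> j @ fg_inv (xg \<beta> j)) (xg \<gamma> k)"
proof (cases "k = j")
  case True
  have "fg_comm (xg \<alpha> j) (xg \<beta> j) \<in> Rel n r"
    using assms unfolding Rel_def R1_def by blast
  then show ?thesis
    using True assms(7) by (simp add: K.commutes_if_relator K.commutes_append_fg_inv)
next
  case False
  have "fg_comm (xg \<gamma> k) (fg_mult (xg \<alpha> j) (fg_inv (xg \<beta> j))) \<in> Rel n r"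
    using assms False unfolding Rel_def R2_def by blast
  then have "K.commutes (xg \<gamma> k) (xg \<alpha> j @ fg_inv (xg \<beta> j))"
    by (rule K.commutes_reduce_cong [OF K.commutes_if_relator refl]) (simp add: fg_mult_def)
  then show ?thesis
    by (rule K.commutes_sym)
qed

lemma commuting_on_xg:
  assumes \<delta>: "inj_on \<delta> {1..r}" "\<delta> ` {1..r} \<subseteq> {1..n-1}" and i: "i \<in> {1..n-1}" "i \<notin> \<delta> ` {1..r}"
  shows "K.commuting_on {1..r} (\<lambda>j. xg i j @ fg_inv (xg (\<delta> j) j)) (\<lambda>k. xg (\<delta> k) k)"
  unfolding K.commuting_on_def
proof (intro conjI ballI)
  fix j k assume j: "j \<in> {1..r}" and k: "k \<in> {1..r}"
  have "\<delta> j \<in> {1..n-1}" "\<delta> k \<in> {1..n-1}" "i \<noteq> \<delta> j" "\<delta> k \<noteq> i"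
    using \<delta>(2) i(2) j k by blast+
  moreover have "k \<noteq> j \<Longrightarrow> \<delta> k \<noteq> \<delta> j"
    using inj_onD [OF \<delta>(1)] j k by blast
  ultimately show "K.commutes (xg i j @ fg_inv (xg (\<delta> j) j)) (xg (\<delta> k) k)"
    using i(1) j k by (intro commutes_xg_fg_inv_xg) auto
next
  fix j assume j: "j \<in> {1..r}"
  then have "\<delta> j \<in> {1..n-1}"
    using \<delta>(2) by blast
  then show "letters (xg i j @ fg_inv (xg (\<delta> j) j)) \<subseteq> Xgens n r" "letters (xg (\<delta> j) j) \<subseteq> Xgens n r"
    using i(1) j by (auto simp: Xgens_def)
qed

lemma area_equiv_comm_word_Xtuple_Delta:
  assumes n: "r + 2 \<le> n" and i: "i \<in> {1..n-1}" and w: "letters w \<subseteq> {1..r}" and v: "letters v \<subseteq> {1..r}"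
    and exp_sum: "exp_sum i v = 0"
  shows "K.area_equiv (4 * length v * length v + 2 * (4 * length w * length w + length w * length v))
    (comm_word (subst (Xtuple i) w) (subst Delta v)) (comm_word (subst Delta w) (subst Delta v))"
proof -
  define \<delta> where "\<delta> k = (if k = i then r + 1 else k)" for k
  define D where "D k = xg (\<delta> k) k" for k
  define E where "E j = xg i j @ fg_inv (D j)" for j
  define E' where "E' j = (if j = i then E i else [])" for j
  have \<delta>: "inj_on \<delta> {1..r}" "\<delta> ` {1..r} \<subseteq> {1..n-1}" "i \<notin> \<delta> ` {1..r}"
    using n i by (auto simp: \<delta>_def inj_on_def)
  have ED: "K.commuting_on {1..r} E D"
    unfolding E_def D_def using commuting_on_xg [OF \<delta>(1,2) i \<delta>(3)] .
  then have E'D: "K.commuting_on {1..r} E' D"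
    by (auto simp: K.commuting_on_def E'_def K.commutes_Nil)
  have E'v: "reduce (subst_word E' v) = []"
    using reduce_subst_word_single [of i "E i" v] exp_sum by (simp add: E'_def [abs_def])
  have X: "reduce (subst_word (\<lambda>j. E j @ D j) w) = reduce (subst (Xtuple i) w)"
    unfolding subst_eq_reduce_subst_word reduce_reduce
    by (rule reduce_subst_word_cong) (simp only: E_def Xtuple_def append_assoc reduce_normalize)
  have Delta: "reduce (subst_word (\<lambda>j. E' j @ D j) u) = reduce (subst Delta u)"
    if "letters u \<subseteq> {1..r}" for u
    unfolding subst_eq_reduce_subst_word reduce_reduce
  proof (rule reduce_subst_word_cong)
    fix j assume "j \<in> letters u"
    then have "j \<noteq> i \<Longrightarrow> D j = Delta j"
      using that by (auto simp: D_def \<delta>_def Delta_def)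
    moreover have "reduce (E i @ D i) = reduce (Delta i)"
      by (simp only: E_def Delta_def append_assoc reduce_normalize)
    ultimately show "reduce (E' j @ D j) = reduce (Delta j)"
      by (cases "j = i") (simp_all add: E'_def)
  qed
  show ?thesis
    by (rule K.area_equiv_reduce_cong [OF K.area_equiv_comm_word_two_families [OF ED E'D w v E'v]])
      (intro reduce_comm_word_cong X Delta w v)+
qed

lemma Area_le_if_area_le:
  assumes "K.area_le k u"
  shows "Area n r u \<le> enat k"
proof -
  obtain cs where cs: "length cs \<le> k" "area_witness n r u cs"
    using assms by (auto simp: K.area_le_def K.relator_conjugates_def area_witness_def conj_product_def)
  then have "(LEAST N. \<exists>cs. area_witness n r u cs \<and> length cs = N) \<le> length cs"
    by (intro Least_le) auto
  with cs show ?thesis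
    unfolding Area_def by auto
qed

lemma Area_fg_mult_fg_inv_le:
  assumes "K.area_equiv k u u'"
  shows "Area n r (fg_mult (reduce u) (fg_inv (reduce u'))) \<le> enat k"
proof (rule Area_le_if_area_le)
  show "K.area_le k (fg_mult (reduce u) (fg_inv (reduce u')))"
    using assms unfolding K.area_equiv_def by (rule K.area_le_reduce_cong) (simp add: fg_mult_def)
qed

end

lemma ereal_of_enat_le_ereal: "a \<le> enat k \<Longrightarrow> real k \<le> c \<Longrightarrow> ereal_of_enat a \<le> ereal c"
proof -
  assume "a \<le> enat k" "real k \<le> c"
  then have "ereal_of_enat a \<le> ereal_of_enat (enat k)"
    by (simp only: ereal_of_enat_le_iff)
  also have "\<dots> \<le> ereal c"
    using \<open>real k \<le> c\<close> by simp
  finally show ?thesis .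
qed

lemma mult_le_max_power2: "(a::nat) * b \<le> max (a\<^sup>2) (b\<^sup>2)"
  by (cases "a \<le> b") (auto simp: power2_eq_square le_max_iff_disj intro: mult_le_mono1 mult_le_mono2)

lemma commutator_cost_le_max: "4 * b * b + 2 * (4 * a * a + a * b) \<le> 14 * max (a\<^sup>2) (b\<^sup>2::nat)"
proof -
  have "a * a \<le> max (a\<^sup>2) (b\<^sup>2)" "b * b \<le> max (a\<^sup>2) (b\<^sup>2)"
    by (simp_all add: power2_eq_square)
  moreover have "4 * b * b + 2 * (4 * a * a + a * b) = 4 * (b * b) + 8 * (a * a) + 2 * (a * b)"
    by (simp add: algebra_simps)
  ultimately show ?thesis
    using mult_le_max_power2 [of a b] by linarith
qed

theorem lemma3p13:
  fixes n r :: nat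
  assumes "n \<ge> r + 2" and "r + 2 \<ge> 2"
  shows "\<exists>C::real. C > 0 \<and>
    (\<forall>v w i. v \<in> Fr r \<longrightarrow> w \<in> Fr r \<longrightarrow> i \<in> {1..n-1} \<longrightarrow>
       (v \<in> comm_subgroup r \<or> i \<in> {r+1..n-1}) \<longrightarrow>
       ereal_of_enat (Area n r
          (fg_mult (fg_comm (subst (Xtuple i) w) (subst Delta v))
                   (fg_inv (fg_comm (subst Delta w) (subst Delta v)))))
       \<le> ereal (C * real (max ((length w)^2) ((length v)^2))))"
proof (intro exI [of _ 14] conjI allI impI)
  fix v w i
  assume v: "v \<in> Fr r" and w: "w \<in> Fr r" and i: "i \<in> {1..n-1}"
    and v_i: "v \<in> comm_subgroup r \<or> i \<in> {r+1..n-1}"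
  let ?M = "max ((length w)\<^sup>2) ((length v)\<^sup>2)"
  let ?k = "4 * length v * length v + 2 * (4 * length w * length w + length w * length v)"
  have lw: "letters w \<subseteq> {1..r}" and lv: "letters v \<subseteq> {1..r}"
    using v w by (auto simp: Fr_def in_free_def)
  then have "exp_sum i v = 0"
    using v_i by (auto intro: exp_sum_comm_subgroup exp_sum_not_in_letters)
  then have Area: "Area n r (fg_mult (fg_comm (subst (Xtuple i) w) (subst Delta v))
      (fg_inv (fg_comm (subst Delta w) (subst Delta v)))) \<le> enat ?k"
    unfolding fg_comm_eq_reduce_comm_word
    by (rule Area_fg_mult_fg_inv_le [OF area_equiv_comm_word_Xtuple_Delta [OF assms(1) i lw lv]])
  have "?k \<le> 14 * ?M"
    by (rule commutator_cost_le_max)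
  then have "real ?k \<le> 14 * real ?M"
    by (metis of_nat_le_iff of_nat_mult of_nat_numeral)
  with Area show "ereal_of_enat (Area n r (fg_mult (fg_comm (subst (Xtuple i) w) (subst Delta v))
      (fg_inv (fg_comm (subst Delta w) (subst Delta v))))) \<le> ereal (14 * real ?M)"
    by (rule ereal_of_enat_le_ereal)
qed simp

end
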